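(* Let $\delta$ be a positive integer, let $$p_\delta(x)=\left(\frac{1+\sqrt{1-4x}}{2}\right)^{\delta+1}+\left(\frac{1-\sqrt{1-4x}}{2}\right)^{\delta+1}$$ (a polynomial in $x$), let $d=\deg p_\delta$ and let $\vartheta_1,\dots,\vartheta_d$ be the roots of $p_\delta$. Then for every positive integer $m$, $$\zeta(m,\delta)=\frac{1}{\delta+1}\sum_{i=1}^{d}\left(\frac{1}{\vartheta_i}\right)^{\lfloor (m+1)/2\rfloor}.$$
   Context: For positive integers $m$ and $\delta$, a $\delta$-deviation set of size $m$ is a finite sequence $(\alpha_1,\dots,\alpha_\ell)$ of positive integers such that (i) $\sum_i\alpha_i=m$; (ii) $\big|\sum_i\alpha_{2i-1}-\sum_i\alpha_{2i}\big|\le 1$; (iii) $\big|\sum_{1\le i\le j}(-1)^{i-1}\alpha_i\big|\le\delta$ for every $j\ge1$; and $\zeta(m,\delta)$ is the number of $\delta$-deviation sets of size $m$. *)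

theory Defs
  imports Complex_Main "HOL-Computational_Algebra.Polynomial"
begin

text \<open>A finite sequence (alpha_1,...,alpha_l) is a list; entry alpha_{i+1} is alpha ! i.\<close>

definition alt_partial :: "nat list \<Rightarrow> nat \<Rightarrow> int" where
  "alt_partial \<alpha> j = (\<Sum>i<j. (-1) ^ i * int (\<alpha> ! i))"

definition deviation_set :: "nat \<Rightarrow> nat \<Rightarrow> nat list \<Rightarrow> bool" where
  "deviation_set m \<delta> \<alpha> \<longleftrightarrow>
     (\<forall>a\<in>set \<alpha>. 0 < a) \<and>
     sum_list \<alpha> = m \<and>
     \<bar>int (\<Sum>i | i < length \<alpha> \<and> even i. \<alpha> ! i)
        - int (\<Sum>i | i < length \<alpha> \<and> odd i. \<alpha> ! i)\<bar> \<le> 1 \<and>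
     (\<forall>j. 1 \<le> j \<longrightarrow> \<bar>alt_partial \<alpha> (min j (length \<alpha>))\<bar> \<le> int \<delta>)"

definition zeta :: "nat \<Rightarrow> nat \<Rightarrow> nat" where
  "zeta m \<delta> = card {\<alpha>. deviation_set m \<delta> \<alpha>}"

end

theory Submission
  imports Defs "HOL-Computational_Algebra.Polynomial_FPS"
    "HOL-Computational_Algebra.Fundamental_Theorem_Algebra"
begin

unbundle fps_syntax

text \<open>A deviation set of size \<open>m\<close> is the run-length encoding of a walk of \<open>m\<close> unit steps that
  starts upwards from \<open>0\<close>, stays in \<open>[-\<delta>, \<delta>]\<close> and ends in \<open>[-1, 1]\<close>. Dropping the first step and,
  for odd \<open>m\<close>, appending the forced step back to \<open>0\<close>, \<open>\<zeta>(m, \<delta>)\<close> counts the walks of \<open>2k - 1\<close>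
  steps from \<open>1\<close> to \<open>0\<close> in \<open>[-\<delta>, \<delta>]\<close>, where \<open>k = \<lfloor>(m+1)/2\<rfloor>\<close>. Let \<open>H\<^sub>h(x)\<close> be the generating function of walks from \<open>h\<close> to \<open>0\<close> by
  number of down-steps. First-step decomposition gives \<open>H\<^sub>h\<^sub>+\<^sub>1 = H\<^sub>h - x H\<^sub>h\<^sub>-\<^sub>1\<close>
  for \<open>1 \<le> h \<le> \<delta>\<close>, with \<open>H\<^sub>\<delta>\<^sub>+\<^sub>1 = 0\<close> and \<open>H\<^sub>0 = 1 + 2 H\<^sub>1\<close>; solving this recurrence with
  the Fibonacci polynomials \<open>F\<^sub>n\<close> yields \<open>H\<^sub>1 L\<^sub>\<delta>\<^sub>+\<^sub>1 = x F\<^sub>\<delta>\<close>, where the Lucas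
  polynomial \<open>L\<^sub>\<delta>\<^sub>+\<^sub>1\<close> is \<open>p\<^sub>\<delta>\<close> and \<open>L'\<^sub>\<delta>\<^sub>+\<^sub>1 = -(\<delta>+1) F\<^sub>\<delta>\<close>. Hence
  \<open>(\<delta>+1) H\<^sub>1 = -x p\<^sub>\<delta>'/p\<^sub>\<delta>\<close>, whose \<open>k\<close>-th coefficient is the \<open>k\<close>-th power sum of the
  reciprocal roots of \<open>p\<^sub>\<delta>\<close>.\<close>

text \<open>\<open>xlogderiv A S\<close> says \<open>S = -X A'/A\<close>, written without dividing by \<open>A\<close>.\<close>

definition xlogderiv :: "'a::comm_ring_1 poly \<Rightarrow> 'a fps \<Rightarrow> bool" where
  "xlogderiv A S \<longleftrightarrow> fps_of_poly A * S = - fps_X * fps_deriv (fps_of_poly A)"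

lemma xlogderiv_1: "xlogderiv 1 0"
  by (simp add: xlogderiv_def)

lemma xlogderiv_mult:
  assumes "xlogderiv A S" and "xlogderiv B T"
  shows "xlogderiv (A * B) (S + T)"
proof -
  have "fps_of_poly A * fps_of_poly B * (S + T)
      = fps_of_poly B * (fps_of_poly A * S) + fps_of_poly A * (fps_of_poly B * T)"
    by (simp add: algebra_simps)
  also have "\<dots> = - fps_X * fps_deriv (fps_of_poly A * fps_of_poly B)"
    using assms by (simp add: xlogderiv_def algebra_simps)
  finally show ?thesis
    by (simp add: xlogderiv_def fps_of_poly_mult)
qed

lemma xlogderiv_power: "xlogderiv A S \<Longrightarrow> xlogderiv (A ^ n) (of_nat n * S)"
  by (induction n) (auto simp: xlogderiv_1 algebra_simps dest: xlogderiv_mult)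

lemma xlogderiv_prod:
  "(\<And>i. i \<in> I \<Longrightarrow> xlogderiv (A i) (S i)) \<Longrightarrow> xlogderiv (\<Prod>i\<in>I. A i) (\<Sum>i\<in>I. S i)"
  by (induction I rule: infinite_finite_induct) (simp_all add: xlogderiv_1 xlogderiv_mult)

lemma xlogderiv_smult: "xlogderiv A S \<Longrightarrow> xlogderiv (smult c A) S"
  unfolding xlogderiv_def fps_of_poly_smult
  by (metis fps_deriv_mult_const_left mult.assoc mult.left_commute)

lemma xlogderiv_unique:
  fixes A :: "'a::idom poly"
  assumes "xlogderiv A S" and "xlogderiv A T" and "A \<noteq> 0"
  shows "S = T"
proof -
  have "fps_of_poly A \<noteq> 0"
    using assms(3) by (metis fps_of_poly_0 fps_of_poly_eq_iff)
  then show ?thesis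
    using assms(1,2) unfolding xlogderiv_def by (metis mult_left_cancel)
qed

definition inverse_powers_fps :: "'a::field \<Rightarrow> 'a fps" where
  "inverse_powers_fps r = Abs_fps (\<lambda>k. if k = 0 then 0 else (1 / r) ^ k)"

lemma xlogderiv_linear_factor:
  assumes "r \<noteq> 0"
  shows "xlogderiv [:-r, 1:] (inverse_powers_fps r)"
  unfolding xlogderiv_def
proof (rule fps_ext)
  fix n
  have linear: "fps_of_poly [:-r, 1:] = fps_const (-r) + fps_X"
    by (simp add: fps_of_poly_pCons fps_of_poly_const)
  show "(fps_of_poly [:-r, 1:] * inverse_powers_fps r) $ n
      = (- fps_X * fps_deriv (fps_of_poly [:-r, 1:])) $ n"
    unfolding linear using assms
    by (cases n) (auto simp: inverse_powers_fps_def algebra_simps power_Suc2 simp del: power_Suc)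
qed

lemma xlogderiv_complex_poly_roots:
  fixes p :: "complex poly"
  assumes "poly p 0 \<noteq> 0"
  shows "xlogderiv p (\<Sum>r\<in>{r. poly p r = 0}. of_nat (order r p) * inverse_powers_fps r)"
proof -
  have "xlogderiv (smult (lead_coeff p) (\<Prod>r|poly p r = 0. [:-r, 1:] ^ order r p))
          (\<Sum>r\<in>{r. poly p r = 0}. of_nat (order r p) * inverse_powers_fps r)"
    using assms
    by (intro xlogderiv_smult xlogderiv_prod xlogderiv_power xlogderiv_linear_factor) auto
  then show ?thesis
    by (simp add: complex_poly_decompose)
qed

fun fib_poly :: "nat \<Rightarrow> 'a::comm_ring_1 poly" where
  "fib_poly 0 = 0"
| "fib_poly (Suc 0) = 1"
| "fib_poly (Suc (Suc n)) = fib_poly (Suc n) - [:0, 1:] * fib_poly n"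

fun lucas_poly :: "nat \<Rightarrow> 'a::comm_ring_1 poly" where
  "lucas_poly 0 = 2"
| "lucas_poly (Suc 0) = 1"
| "lucas_poly (Suc (Suc n)) = lucas_poly (Suc n) - [:0, 1:] * lucas_poly n"

lemma lucas_poly_Suc:
  "(lucas_poly (Suc n) :: 'a::comm_ring_1 poly) = fib_poly (Suc n) - 2 * [:0, 1:] * fib_poly n"
proof (induction n rule: fib_poly.induct)
  case (3 n)
  have "(lucas_poly (Suc (Suc (Suc n))) :: 'a poly) = lucas_poly (Suc (Suc n)) - [:0, 1:] * lucas_poly (Suc n)"
    by (simp only: lucas_poly.simps)
  also have "\<dots> = (fib_poly (Suc (Suc n)) - 2 * [:0, 1:] * fib_poly (Suc n))
      - [:0, 1:] * (fib_poly (Suc n) - 2 * [:0, 1:] * fib_poly n)"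
    by (simp only: 3)
  also have "\<dots> = fib_poly (Suc (Suc (Suc n))) - 2 * [:0, 1:] * fib_poly (Suc (Suc n))"
    by (simp only: fib_poly.simps) (simp add: algebra_simps)
  finally show ?case .
qed (simp_all add: numeral_poly)

lemma pderiv_lucas_poly:
  "pderiv (lucas_poly (Suc n) :: 'a::idom poly) = - (of_nat (Suc n) * fib_poly n)"
proof (induction n rule: fib_poly.induct)
  case (3 n)
  have "pderiv (lucas_poly (Suc (Suc (Suc n))) :: 'a poly)
      = pderiv (lucas_poly (Suc (Suc n))) - lucas_poly (Suc n) - [:0, 1:] * pderiv (lucas_poly (Suc n))"
    by (simp only: lucas_poly.simps) (simp add: pderiv_diff pderiv_mult pderiv_pCons)
  also have "\<dots> = - (of_nat (Suc (Suc n)) * fib_poly (Suc n)) - (fib_poly (Suc n) - 2 * [:0, 1:] * fib_poly n)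
      + [:0, 1:] * (of_nat (Suc n) * fib_poly n)"
    unfolding 3 by (simp only: lucas_poly_Suc[of n]) simp
  also have "\<dots> = - (of_nat (Suc (Suc (Suc n))) * fib_poly (Suc (Suc n)))"
    by (simp only: fib_poly.simps) (simp add: algebra_simps)
  finally show ?case .
qed (simp_all add: pderiv_pCons pderiv_diff pderiv_mult numeral_poly)

lemma poly_lucas_poly:
  assumes "a + b = 1" and "a * b = x"
  shows "poly (lucas_poly n) x = a ^ n + b ^ n"
proof (induction n rule: lucas_poly.induct)
  case (3 n)
  have "a ^ Suc (Suc n) + b ^ Suc (Suc n)
      = (a + b) * (a ^ Suc n + b ^ Suc n) - a * b * (a ^ n + b ^ n)"
    by (simp add: algebra_simps)
  with 3 assms show ?case
    by simp
qed (use assms in simp_all)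

lemma poly_lucas_poly_csqrt:
  "poly (lucas_poly n) x = ((1 + csqrt (1 - 4 * x)) / 2) ^ n + ((1 - csqrt (1 - 4 * x)) / 2) ^ n"
proof (rule poly_lucas_poly)
  have "(1 + csqrt (1 - 4 * x)) / 2 * ((1 - csqrt (1 - 4 * x)) / 2) = (1 - (csqrt (1 - 4 * x))\<^sup>2) / 4"
    by (simp add: field_simps power2_eq_square)
  then show "(1 + csqrt (1 - 4 * x)) / 2 * ((1 - csqrt (1 - 4 * x)) / 2) = x"
    by simp
qed (simp add: field_simps)

text \<open>\<open>bounded_walks d k h\<close> counts the walks of \<open>k\<close> unit steps from height \<open>h\<close> to \<open>0\<close>
  whose heights before each step lie in \<open>[-d, d]\<close>; \<open>walks_fps d h\<close> grades the walks from \<open>h\<close>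
  by their number \<open>j\<close> of down-steps (the length is then \<open>2 j - h\<close>).\<close>

fun bounded_walks :: "nat \<Rightarrow> nat \<Rightarrow> int \<Rightarrow> nat" where
  "bounded_walks d 0 h = (if h = 0 then 1 else 0)"
| "bounded_walks d (Suc k) h =
     (if \<bar>h\<bar> \<le> int d then bounded_walks d k (h - 1) + bounded_walks d k (h + 1) else 0)"

lemma bounded_walks_uminus: "bounded_walks d k (- h) = bounded_walks d k h"
proof (induction k arbitrary: h)
  case (Suc k)
  have "- h - 1 = - (h + 1)" and "- h + 1 = - (h - 1)"
    by simp_all
  then show ?case
    using Suc[of "h + 1"] Suc[of "h - 1"] by (simp only: bounded_walks.simps abs_minus_cancel add.commute)
qed simp

lemma bounded_walks_eq_0_above: "int d < h \<Longrightarrow> bounded_walks d k h = 0"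
  by (cases k) auto

definition walks_fps :: "nat \<Rightarrow> nat \<Rightarrow> complex fps" where
  "walks_fps d h = Abs_fps (\<lambda>j. if h \<le> 2 * j then of_nat (bounded_walks d (2 * j - h) (int h)) else 0)"

lemma walks_fps_nth:
  "walks_fps d h $ j = (if h \<le> 2 * j then of_nat (bounded_walks d (2 * j - h) (int h)) else 0)"
  by (simp add: walks_fps_def)

lemma walks_fps_Suc:
  assumes "1 \<le> h" and "h \<le> d"
  shows "walks_fps d (Suc h) = walks_fps d h - fps_X * walks_fps d (h - 1)"
proof (rule fps_ext)
  fix j
  have X: "(fps_X * walks_fps d (h - 1)) $ j = (if j = 0 then 0 else walks_fps d (h - 1) $ (j - 1))"
    by simp
  show "walks_fps d (Suc h) $ j = (walks_fps d h - fps_X * walks_fps d (h - 1)) $ j"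
  proof (cases "h < 2 * j")
    case True
    then obtain k where k: "2 * j = Suc (h + k)"
      using less_imp_Suc_add by blast
    then have "j \<noteq> 0" and "h - 1 \<le> 2 * (j - 1)" and "2 * (j - 1) - (h - 1) = k"
      and "int (h - 1) = int h - 1"
      using assms by linarith+
    then have "(fps_X * walks_fps d (h - 1)) $ j = of_nat (bounded_walks d k (int h - 1))"
      unfolding X walks_fps_nth by simp
    moreover have "walks_fps d (Suc h) $ j = of_nat (bounded_walks d k (int h + 1))"
      and "walks_fps d h $ j = of_nat (bounded_walks d (Suc k) (int h))"
    proof -
      have "Suc h \<le> 2 * j" and "2 * j - Suc h = k" and "h \<le> 2 * j" and "2 * j - h = Suc k"
        using k by linarith+
      then show "walks_fps d (Suc h) $ j = of_nat (bounded_walks d k (int h + 1))"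
        and "walks_fps d h $ j = of_nat (bounded_walks d (Suc k) (int h))"
        unfolding walks_fps_nth by (simp_all add: add.commute)
    qed
    ultimately show ?thesis
      using assms by simp
  next
    case False
    then have "\<not> (j \<noteq> 0 \<and> h - 1 \<le> 2 * (j - 1))"
      using assms by linarith
    then have "(fps_X * walks_fps d (h - 1)) $ j = 0"
      unfolding X walks_fps_nth by auto
    with False show ?thesis
      using assms by (simp add: walks_fps_nth)
  qed
qed

lemma walks_fps_Suc_eq_0: "walks_fps d (Suc d) = 0"
  by (intro fps_ext) (simp add: walks_fps_nth bounded_walks_eq_0_above)

lemma walks_fps_0: "walks_fps d 0 = 1 + 2 * walks_fps d 1"
proof (rule fps_ext)
  fix j
  show "walks_fps d 0 $ j = (1 + 2 * walks_fps d 1) $ j"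
  proof (cases j)
    case (Suc i)
    have "bounded_walks d (Suc (2 * i + 1)) 0 = 2 * bounded_walks d (2 * i + 1) 1"
      using bounded_walks_uminus[of d "2 * i + 1" 1] by simp
    then show ?thesis
      using Suc by (simp add: walks_fps_nth numeral_fps_const)
  qed (simp add: walks_fps_nth)
qed

lemma fps_of_poly_fib_poly_Suc_Suc:
  "fps_of_poly (fib_poly (Suc (Suc n)) :: 'a::comm_ring_1 poly)
    = fps_of_poly (fib_poly (Suc n)) - fps_X * fps_of_poly (fib_poly n)"
  by (simp only: fib_poly.simps fps_of_poly_diff fps_of_poly_mult fps_of_poly_fps_X)

lemma fib_poly_recurrence_solution:
  fixes G :: "nat \<Rightarrow> 'a::comm_ring_1 fps"
  assumes rec: "\<And>h. 1 \<le> h \<Longrightarrow> h \<le> d \<Longrightarrow> G (Suc h) = G h - fps_X * G (h - 1)"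
    and "h \<le> d"
  shows "G (Suc h) = G 1 * fps_of_poly (fib_poly (Suc h)) - fps_X * G 0 * fps_of_poly (fib_poly h)"
  using \<open>h \<le> d\<close>
proof (induction h rule: fib_poly.induct)
  case 2
  then show ?case
    using rec[of 1] by (simp add: numeral_2_eq_2 fps_of_poly_diff fps_of_poly_mult)
next
  case (3 n)
  have "G (Suc (Suc (Suc n))) = G (Suc (Suc n)) - fps_X * G (Suc n)"
    using 3 rec[of "Suc (Suc n)"] by simp
  also have "\<dots> = (G 1 * fps_of_poly (fib_poly (Suc (Suc n))) - fps_X * G 0 * fps_of_poly (fib_poly (Suc n)))
      - fps_X * (G 1 * fps_of_poly (fib_poly (Suc n)) - fps_X * G 0 * fps_of_poly (fib_poly n))"
    using 3 by (simp del: fib_poly.simps)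
  also have "\<dots> = G 1 * (fps_of_poly (fib_poly (Suc (Suc n))) - fps_X * fps_of_poly (fib_poly (Suc n)))
      - fps_X * G 0 * (fps_of_poly (fib_poly (Suc n)) - fps_X * fps_of_poly (fib_poly n))"
    by (simp add: algebra_simps del: fib_poly.simps)
  finally show ?case
    by (simp only: fps_of_poly_fib_poly_Suc_Suc)
qed simp

lemma walks_fps_1_mult_lucas_poly:
  "walks_fps d 1 * fps_of_poly (lucas_poly (Suc d)) = fps_X * fps_of_poly (fib_poly d)"
proof -
  have "0 = walks_fps d 1 * fps_of_poly (fib_poly (Suc d)) - fps_X * walks_fps d 0 * fps_of_poly (fib_poly d)"
    using fib_poly_recurrence_solution[of d "walks_fps d", OF walks_fps_Suc order.refl]
    by (simp add: walks_fps_Suc_eq_0)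
  also have "\<dots> = walks_fps d 1 * fps_of_poly (lucas_poly (Suc d)) - fps_X * fps_of_poly (fib_poly d)"
    by (simp add: walks_fps_0 lucas_poly_Suc fps_of_poly_diff fps_of_poly_mult numeral_poly algebra_simps)
  finally show ?thesis
    by simp
qed

lemma xlogderiv_lucas_poly:
  "xlogderiv (lucas_poly (Suc d)) (of_nat (Suc d) * walks_fps d 1)"
proof -
  have "fps_deriv (fps_of_poly (lucas_poly (Suc d) :: complex poly)) = - (of_nat (Suc d) * fps_of_poly (fib_poly d))"
    by (simp only: fps_of_poly_pderiv[symmetric] pderiv_lucas_poly fps_of_poly_uminus
        fps_of_poly_mult of_nat_poly fps_of_poly_const fps_of_nat)
  then show ?thesis
    unfolding xlogderiv_def by (simp add: walks_fps_1_mult_lucas_poly[symmetric] ac_simps)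
qed

lemma lucas_poly_reciprocal_root_power_sum:
  assumes "1 \<le> k"
  shows "(\<Sum>r\<in>{r. poly (lucas_poly (Suc d)) r = 0}. of_nat (order r (lucas_poly (Suc d))) * (1 / r) ^ k)
    = (of_nat (Suc d * bounded_walks d (2 * k - 1) 1) :: complex)"
proof -
  let ?p = "lucas_poly (Suc d) :: complex poly"
  let ?S = "\<Sum>r\<in>{r. poly ?p r = 0}. of_nat (order r ?p) * inverse_powers_fps r"
  have "poly ?p 0 = 1"
    using poly_lucas_poly[of 1 0 0 "Suc d"] by simp
  then have "?S = of_nat (Suc d) * walks_fps d 1"
    by (intro xlogderiv_unique[OF xlogderiv_complex_poly_roots xlogderiv_lucas_poly]) auto
  then have "?S $ k = of_nat (Suc d) * walks_fps d 1 $ k"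
    by (simp add: fps_of_nat[symmetric])
  then show ?thesis
    using assms by (simp add: fps_sum_nth inverse_powers_fps_def walks_fps_nth fps_of_nat[symmetric]
        ring_distribs)
qed

text \<open>A list of positive integers is read as the run lengths of a walk that starts at height \<open>s\<close>
  and moves first in direction \<open>e\<close>, then \<open>-e\<close>, and so on. Runs are monotone, so bounding their
  endpoints by \<open>d\<close> bounds the whole walk; the final height must lie in \<open>[-1, 1]\<close>.\<close>

fun runs_within :: "nat \<Rightarrow> int \<Rightarrow> int \<Rightarrow> nat list \<Rightarrow> bool" where
  "runs_within d s e [] \<longleftrightarrow> \<bar>s\<bar> \<le> 1"
| "runs_within d s e (a # r) \<longleftrightarrow> \<bar>s + e * int a\<bar> \<le> int d \<and> runs_within d (s + e * int a) (- e) r"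

lemma alt_partial_0: "alt_partial \<alpha> 0 = 0"
  by (simp add: alt_partial_def)

lemma alt_partial_Suc_Cons: "alt_partial (a # r) (Suc j) = int a - alt_partial r j"
  unfolding alt_partial_def sum.lessThan_Suc_shift by (simp add: sum_negf)

lemma runs_within_iff_alt_partial:
  "runs_within d s e \<alpha> \<longleftrightarrow> \<bar>s + e * alt_partial \<alpha> (length \<alpha>)\<bar> \<le> 1 \<and>
     (\<forall>j < length \<alpha>. \<bar>s + e * alt_partial \<alpha> (Suc j)\<bar> \<le> int d)"
proof (induction \<alpha> arbitrary: s e)
  case Nil
  then show ?case
    by (simp add: alt_partial_0)
next
  case (Cons a r)
  have "s + e * alt_partial (a # r) (Suc j) = (s + e * int a) + - e * alt_partial r j" for j
    by (simp add: alt_partial_Suc_Cons algebra_simps)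
  then show ?case
    unfolding runs_within.simps Cons.IH length_Cons All_less_Suc2
    by (simp only: alt_partial_0 mult_zero_right add_0_right) blast
qed

lemma sum_alternating_eq_even_minus_odd:
  "(\<Sum>i<n. (-1) ^ i * int (g i)) = int (\<Sum>i | i < n \<and> even i. g i) - int (\<Sum>i | i < n \<and> odd i. g i)"
proof (induction n)
  case (Suc n)
  have split: "{i. i < Suc n \<and> P i} = (if P n then insert n {i. i < n \<and> P i} else {i. i < n \<and> P i})"
    for P
    by (auto simp: less_Suc_eq)
  show ?case
    by (cases "even n") (simp_all add: split Suc.IH)
qed simp

lemma deviation_set_iff_runs_within:
  "deviation_set m d \<alpha> \<longleftrightarrow> (\<forall>a\<in>set \<alpha>. 0 < a) \<and> sum_list \<alpha> = m \<and> runs_within d 0 1 \<alpha>"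
proof -
  have prefixes: "(\<forall>j. 1 \<le> j \<longrightarrow> \<bar>alt_partial \<alpha> (min j (length \<alpha>))\<bar> \<le> int d)
      \<longleftrightarrow> (\<forall>j < length \<alpha>. \<bar>alt_partial \<alpha> (Suc j)\<bar> \<le> int d)" (is "?L \<longleftrightarrow> ?R")
  proof
    assume L: ?L
    show ?R
    proof (intro allI impI)
      fix j assume "j < length \<alpha>"
      then show "\<bar>alt_partial \<alpha> (Suc j)\<bar> \<le> int d"
        using L[rule_format, of "Suc j"] by (simp add: min_def)
    qed
  next
    assume ?R
    then have "\<bar>alt_partial \<alpha> (min j (length \<alpha>))\<bar> \<le> int d" if "1 \<le> j" for j
      using that by (cases "min j (length \<alpha>)") (simp_all add: alt_partial_0)
    then show ?L
      by blast
  qed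
  have total: "int (\<Sum>i | i < length \<alpha> \<and> even i. \<alpha> ! i) - int (\<Sum>i | i < length \<alpha> \<and> odd i. \<alpha> ! i)
      = alt_partial \<alpha> (length \<alpha>)"
    unfolding alt_partial_def by (rule sum_alternating_eq_even_minus_odd[symmetric])
  show ?thesis
    unfolding deviation_set_def runs_within_iff_alt_partial prefixes total by simp
qed

definition run_lists :: "nat \<Rightarrow> nat \<Rightarrow> int \<Rightarrow> int \<Rightarrow> nat list set" where
  "run_lists d m s e = {\<alpha>. (\<forall>a\<in>set \<alpha>. 0 < a) \<and> sum_list \<alpha> = m \<and> runs_within d s e \<alpha>}"

lemma finite_run_lists: "finite (run_lists d m s e)"
proof (rule finite_subset)
  have "length \<alpha> \<le> sum_list \<alpha>" if "\<forall>a\<in>set \<alpha>. 0 < a" for \<alpha> :: "nat list"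
    using that by (induction \<alpha>) auto
  then show "run_lists d m s e \<subseteq> {\<alpha>. set \<alpha> \<subseteq> {0..m} \<and> length \<alpha> \<le> m}"
    unfolding run_lists_def using member_le_sum_list by fastforce
qed (simp add: finite_lists_length_le)

lemma positive_list_sum_eq_1:
  fixes \<alpha> :: "nat list"
  shows "(\<forall>a\<in>set \<alpha>. 0 < a) \<Longrightarrow> sum_list \<alpha> = 1 \<Longrightarrow> \<alpha> = [1]"
proof (induction \<alpha>)
  case (Cons a r)
  then have "0 < a" and sum: "a + sum_list r = 1"
    by simp_all
  then have "sum_list r = 0"
    by linarith
  then have "r = []"
    using Cons.prems(1) by (cases r) auto
  with sum show ?case
    by simp
qed simp

lemma run_lists_1: "run_lists d 1 s e = (if \<bar>s + e\<bar> \<le> 1 \<and> \<bar>s + e\<bar> \<le> int d then {[1]} else {})"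
proof -
  have "(\<forall>a\<in>set \<alpha>. 0 < a) \<and> sum_list \<alpha> = 1 \<longleftrightarrow> \<alpha> = [1]" for \<alpha> :: "nat list"
    using positive_list_sum_eq_1 by auto
  then have "run_lists d 1 s e = {\<alpha>. \<alpha> = [1] \<and> runs_within d s e \<alpha>}"
    unfolding run_lists_def by blast
  also have "\<dots> = (if runs_within d s e [1] then {[1]} else {})"
    by auto
  finally show ?thesis
    by (simp add: conj_commute)
qed

fun inc_head :: "nat list \<Rightarrow> nat list" where
  "inc_head [] = []"
| "inc_head (a # r) = Suc a # r"

lemma inj_inc_head: "inj inc_head"
proof (rule injI)
  fix x y :: "nat list"
  assume "inc_head x = inc_head y"
  then show "x = y"
    by (cases x; cases y) simp_all
qed

lemma runs_within_Suc_Cons: "runs_within d s e (Suc a # r) \<longleftrightarrow> runs_within d (s + e) e (a # r)"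
proof -
  have "s + e * int (Suc a) = s + e + e * int a"
    by (simp add: algebra_simps)
  then show ?thesis
    by (simp only: runs_within.simps)
qed

lemma run_lists_Suc:
  assumes "0 < m"
  shows "run_lists d (Suc m) s e
    = Cons 1 ` {r \<in> run_lists d m (s + e) (- e). \<bar>s + e\<bar> \<le> int d} \<union> inc_head ` run_lists d m (s + e) e"
proof (intro equalityI subsetI)
  fix \<alpha> assume \<alpha>: "\<alpha> \<in> run_lists d (Suc m) s e"
  then have "\<alpha> \<noteq> []" and "\<forall>x\<in>set \<alpha>. 0 < x"
    by (auto simp: run_lists_def)
  then obtain a r where a: "\<alpha> = Suc a # r"
    by (metis gr0_implies_Suc list.set_intros(1) neq_Nil_conv)
  show "\<alpha> \<in> Cons 1 ` {r \<in> run_lists d m (s + e) (- e). \<bar>s + e\<bar> \<le> int d} \<union> inc_head ` run_lists d m (s + e) e"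
  proof (cases a)
    case 0
    then show ?thesis
      using \<alpha> a unfolding run_lists_def by auto
  next
    case (Suc b)
    then have "a # r \<in> run_lists d m (s + e) e"
      using \<alpha> unfolding a run_lists_def by (simp add: runs_within_Suc_Cons del: runs_within.simps(2))
    moreover have "\<alpha> = inc_head (a # r)"
      by (simp add: a)
    ultimately show ?thesis
      by blast
  qed
next
  fix \<alpha> assume "\<alpha> \<in> Cons 1 ` {r \<in> run_lists d m (s + e) (- e). \<bar>s + e\<bar> \<le> int d} \<union> inc_head ` run_lists d m (s + e) e"
  then show "\<alpha> \<in> run_lists d (Suc m) s e"
  proof (elim UnE imageE)
    fix r assume "\<alpha> = 1 # r" and "r \<in> {r \<in> run_lists d m (s + e) (- e). \<bar>s + e\<bar> \<le> int d}"
    then show ?thesis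
      by (simp add: run_lists_def)
  next
    fix \<beta> assume \<beta>: "\<alpha> = inc_head \<beta>" "\<beta> \<in> run_lists d m (s + e) e"
    moreover obtain b r where "\<beta> = b # r"
      using \<beta>(2) assms by (cases \<beta>) (auto simp: run_lists_def)
    ultimately show ?thesis
      by (simp add: run_lists_def runs_within_Suc_Cons del: runs_within.simps(2))
  qed
qed

lemma run_lists_outward_empty:
  assumes "\<bar>s\<bar> \<le> int d" and "int d < \<bar>s + e\<bar>" and "e = 1 \<or> e = -1" and "0 < m"
  shows "run_lists d m (s + e) e = {}"
proof -
  have "\<not> runs_within d (s + e) e (a # r)" if "0 < a" for a r
    using assms(1-3) that by (cases "e = 1") auto
  then have "\<alpha> = []" if "\<alpha> \<in> run_lists d m (s + e) e" for \<alpha>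
    using that by (cases \<alpha>) (auto simp: run_lists_def)
  moreover have "[] \<notin> run_lists d m (s + e) e"
    using assms(4) by (simp add: run_lists_def)
  ultimately show ?thesis
    by blast
qed

lemma card_run_lists_Suc:
  assumes "\<bar>s\<bar> \<le> int d" and "e = 1 \<or> e = -1" and "0 < m"
  shows "card (run_lists d (Suc m) s e) = (if \<bar>s + e\<bar> \<le> int d
    then card (run_lists d m (s + e) (- e)) + card (run_lists d m (s + e) e) else 0)"
proof (cases "\<bar>s + e\<bar> \<le> int d")
  case True
  have "hd (inc_head \<beta>) \<noteq> 1" if \<beta>: "\<beta> \<in> run_lists d m (s + e) e" for \<beta>
  proof -
    obtain b r where "\<beta> = b # r" and "0 < b"
      using \<beta> assms(3) by (cases \<beta>) (auto simp: run_lists_def)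
    then show ?thesis
      by simp
  qed
  then have "hd \<alpha> \<noteq> 1" if "\<alpha> \<in> inc_head ` run_lists d m (s + e) e" for \<alpha>
    using that by blast
  moreover have "hd \<alpha> = 1" if "\<alpha> \<in> Cons 1 ` run_lists d m (s + e) (- e)" for \<alpha>
    using that by auto
  ultimately have "Cons 1 ` run_lists d m (s + e) (- e) \<inter> inc_head ` run_lists d m (s + e) e = {}"
    by (meson disjoint_iff)
  then have "card (run_lists d (Suc m) s e)
      = card (Cons 1 ` run_lists d m (s + e) (- e)) + card (inc_head ` run_lists d m (s + e) e)"
    using True assms(3) by (simp add: run_lists_Suc card_Un_disjoint finite_run_lists)
  also have "\<dots> = card (run_lists d m (s + e) (- e)) + card (run_lists d m (s + e) e)"
    using inj_inc_head by (simp add: card_image inj_on_subset)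
  finally show ?thesis
    using True by simp
next
  case False
  then show ?thesis
    using assms by (simp add: run_lists_Suc run_lists_outward_empty)
qed

fun near_zero_walks :: "nat \<Rightarrow> nat \<Rightarrow> int \<Rightarrow> nat" where
  "near_zero_walks d 0 h = (if \<bar>h\<bar> \<le> 1 \<and> \<bar>h\<bar> \<le> int d then 1 else 0)"
| "near_zero_walks d (Suc n) h =
     (if \<bar>h\<bar> \<le> int d then near_zero_walks d n (h - 1) + near_zero_walks d n (h + 1) else 0)"

lemma card_run_lists:
  assumes "\<bar>s\<bar> \<le> int d" and "e = 1 \<or> e = -1" and "0 < m"
  shows "card (run_lists d m s e) = near_zero_walks d (m - 1) (s + e)"
  using assms(3,1,2)
proof (induction m arbitrary: s e rule: nat_induct_non_zero)
  case 1
  then show ?case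
    unfolding run_lists_1 by simp
next
  case (Suc m)
  then obtain n where n: "m = Suc n"
    using gr0_implies_Suc by blast
  have "card (run_lists d m (s + e) (- e)) = near_zero_walks d n s"
    and "card (run_lists d m (s + e) e) = near_zero_walks d n (s + e + e)"
    if "\<bar>s + e\<bar> \<le> int d"
    using Suc.IH[of "s + e" "- e"] Suc.IH[of "s + e" e] Suc.prems that n by auto
  then have "card (run_lists d (Suc m) s e) = (if \<bar>s + e\<bar> \<le> int d
      then near_zero_walks d n s + near_zero_walks d n (s + e + e) else 0)"
    using Suc by (simp add: card_run_lists_Suc)
  also have "\<dots> = near_zero_walks d m (s + e)"
    using Suc.prems(2) unfolding n by auto
  finally show ?case
    by simp
qed

lemma near_zero_walks_eq_bounded_walks:
  assumes "1 \<le> d"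
  shows "near_zero_walks d n h = (if even (int n + h) then bounded_walks d n h else bounded_walks d (Suc n) h)"
proof (induction n arbitrary: h)
  case 0
  show ?case
    using assms by (auto simp: abs_le_iff) presburger+
next
  case (Suc n)
  show ?case
    using Suc.IH[of "h - 1"] Suc.IH[of "h + 1"] by auto
qed

lemma zeta_eq_bounded_walks:
  assumes "1 \<le> d" and "1 \<le> m"
  shows "zeta m d = bounded_walks d (2 * ((m + 1) div 2) - 1) 1"
proof -
  have "zeta m d = card (run_lists d m 0 1)"
    by (simp add: zeta_def run_lists_def deviation_set_iff_runs_within)
  also have "\<dots> = near_zero_walks d (m - 1) 1"
    using assms by (simp add: card_run_lists)
  also have "\<dots> = bounded_walks d (2 * ((m + 1) div 2) - 1) 1"
    using assms by (cases "even m") (auto simp: near_zero_walks_eq_bounded_walks elim!: evenE oddE)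
  finally show ?thesis .
qed

theorem theorem3:
  fixes \<delta> m :: nat and p :: "complex poly"
  assumes "0 < \<delta>" and "0 < m"
    and "\<forall>x. poly p x = ((1 + csqrt (1 - 4 * x)) / 2) ^ (\<delta> + 1)
                        + ((1 - csqrt (1 - 4 * x)) / 2) ^ (\<delta> + 1)"
  shows "of_nat (zeta m \<delta>) =
    1 / of_nat (\<delta> + 1) * (\<Sum>r\<in>{r. poly p r = 0}. of_nat (order r p) * (1 / r) ^ ((m + 1) div 2))"
proof -
  have "p = lucas_poly (Suc \<delta>)"
    using assms(3) by (simp add: poly_eq_poly_eq_iff[symmetric] fun_eq_iff poly_lucas_poly_csqrt)
  moreover have "1 \<le> (m + 1) div 2"
    using assms(2) by simp
  ultimately have "(\<Sum>r\<in>{r. poly p r = 0}. of_nat (order r p) * (1 / r) ^ ((m + 1) div 2))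
      = of_nat (Suc \<delta> * zeta m \<delta>)"
    using assms(1,2) by (simp only: lucas_poly_reciprocal_root_power_sum zeta_eq_bounded_walks)
  moreover have "(of_nat (Suc \<delta>) :: complex) \<noteq> 0"
    by (simp only: of_nat_eq_0_iff)
  ultimately show ?thesis
    by (simp only: of_nat_mult Suc_eq_plus1[symmetric]) (simp add: field_simps del: of_nat_Suc)
qed

end
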